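(* Let $\mathrm K$ be a field with a discrete valuation $\nu$, residue field $\mathrm k$ and uniformizer $\pi$, and let $\mathrm{Sp}=\mathrm{Sp}_{\nu,\pi}\colon\mathcal A_\bullet(\mathrm K)\to\mathcal A_\bullet(\mathrm k)$. Then for every $(x_0,\dots,x_n)\in\mathcal A_n(\mathrm K)$, $$\Delta\big(\mathrm{Sp}(x_0,\dots,x_n)\big)=\sum_{j\in\mathbb Z/(n+1)}\sum_{i=1}^{n-1}\mathrm{Sp}(x_j,x_{j+1},\dots,x_{j+i})\wedge\mathrm{Sp}(x_j,x_{j+i+1},\dots,x_{j+n}).$$ That is, $\Delta\circ\mathrm{Sp}=(\mathrm{Sp}\wedge\mathrm{Sp})\circ\Delta$.
   Context: For a field $\mathrm F$ and $n\ge1$, let $\mathcal A_n(\mathrm F)$ be the $\mathbb Q$-vector space generated by tuples $(x_0,\dots,x_n)\in\mathrm F^{n+1}$ modulo the relations $(x_0,x_1,\dots,x_n)=(x_1,\dots,x_n,x_0)$ and $(x,\dots,x)=0$. Set $\mathcal A_\bullet=\bigoplus_{n\ge1}\mathcal A_n$. The cobracket $\Delta\colon\mathcal A_\bullet\to\Lambda^2\mathcal A_\bullet$ is $$\Delta(x_0,\dots,x_n)=\sum_{j\in\mathbb Z/(n+1)}\sum_{i=1}^{n-1}(x_j,x_{j+1},\dots,x_{j+i})\wedge(x_j,x_{j+i+1},\dots,x_{j+n}),$$ with indices taken mod $n+1$. Specialization: put $m=\min_j\nu(x_j)$. Then $\mathrm{Sp}_{\nu,\pi}(x_0,\dots,x_n)=(y_0,\dots,y_n)$,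 where $y_i$ is the residue class in $\mathrm k$ of $x_i\pi^{-m}$ if $\nu(x_i)=m$, and $y_i=0$ if $\nu(x_i)>m$. Each sub-tuple on the right-hand side of the claim is specialized using its own minimum valuation. *)

theory Defs
  imports Complex_Main "HOL-Library.Function_Algebras"
begin

definition discrete_valuation :: "('a::field \<Rightarrow> int) \<Rightarrow> bool" where
  "discrete_valuation \<nu> \<longleftrightarrow>
     (\<forall>x y. x \<noteq> 0 \<longrightarrow> y \<noteq> 0 \<longrightarrow> \<nu> (x * y) = \<nu> x + \<nu> y) \<and>
     (\<forall>x y. x \<noteq> 0 \<longrightarrow> y \<noteq> 0 \<longrightarrow> x + y \<noteq> 0 \<longrightarrow> \<nu> (x + y) \<ge> min (\<nu> x) (\<nu> y)) \<and>
     (\<forall>n. \<exists>x. x \<noteq> 0 \<and> \<nu> x = n)"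

definition val_ring :: "('a::field \<Rightarrow> int) \<Rightarrow> 'a set" where
  "val_ring \<nu> = {x. x = 0 \<or> \<nu> x \<ge> 0}"

definition val_ideal :: "('a::field \<Rightarrow> int) \<Rightarrow> 'a set" where
  "val_ideal \<nu> = {x. x = 0 \<or> \<nu> x > 0}"

text \<open>The residue field k = O/m is represented by a field type together with
  a surjective ring homomorphism O \<rightarrow> k with kernel m (values outside O are irrelevant).\<close>
definition residue_map :: "('a::field \<Rightarrow> int) \<Rightarrow> ('a \<Rightarrow> 'b::field) \<Rightarrow> bool" where
  "residue_map \<nu> res \<longleftrightarrow>
     (\<forall>x\<in>val_ring \<nu>. \<forall>y\<in>val_ring \<nu>. res (x + y) = res x + res y \<and> res (x * y) = res x * res y) \<and>
     res 1 = 1 \<and>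
     (\<forall>x\<in>val_ring \<nu>. res x = 0 \<longleftrightarrow> x \<in> val_ideal \<nu>) \<and>
     (\<forall>b. \<exists>x\<in>val_ring \<nu>. res x = b)"

text \<open>m = min of valuations (over nonzero entries); entries of valuation m are
  rescaled by pi^(-m) and reduced, others become 0. The all-zero tuple maps to
  the all-zero tuple.\<close>
definition Sp :: "('a::field \<Rightarrow> int) \<Rightarrow> ('a \<Rightarrow> 'b::field) \<Rightarrow> 'a \<Rightarrow> 'a list \<Rightarrow> 'b list" where
  "Sp \<nu> res \<pi> xs =
     (let m = Min (\<nu> ` {x \<in> set xs. x \<noteq> 0})
      in map (\<lambda>x. if x \<noteq> 0 \<and> \<nu> x = m then res (x * \<pi> powi (- m)) else 0) xs)"

text \<open>Elements of the free Q-vector space on pairs of tuples (finitely supported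
  functions); the class of single a b in the quotient is a \<and> b.\<close>
definition single :: "'b list \<Rightarrow> 'b list \<Rightarrow> ('b list \<times> 'b list \<Rightarrow> rat)" where
  "single a b = (\<lambda>p. if p = (a, b) then 1 else 0)"

text \<open>Relations defining \<Lambda>^2 A_\<bullet> as a quotient of Q[X \<times> X], X = tuples of
  length \<ge> 2 (i.e. n \<ge> 1): cyclic invariance and vanishing of constant tuples in
  each slot, plus antisymmetry.\<close>
inductive_set wedge_rel :: "('b list \<times> 'b list \<Rightarrow> rat) set" where
  zero: "0 \<in> wedge_rel"
| add: "u \<in> wedge_rel \<Longrightarrow> v \<in> wedge_rel \<Longrightarrow> u + v \<in> wedge_rel"
| smult: "u \<in> wedge_rel \<Longrightarrow> (\<lambda>p. c * u p) \<in> wedge_rel"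
| cyc_l: "length a \<ge> 2 \<Longrightarrow> length b \<ge> 2 \<Longrightarrow> single a b - single (rotate1 a) b \<in> wedge_rel"
| cyc_r: "length a \<ge> 2 \<Longrightarrow> length b \<ge> 2 \<Longrightarrow> single a b - single a (rotate1 b) \<in> wedge_rel"
| const_l: "length a \<ge> 2 \<Longrightarrow> length b \<ge> 2 \<Longrightarrow> (\<forall>x\<in>set a. x = hd a) \<Longrightarrow> single a b \<in> wedge_rel"
| const_r: "length a \<ge> 2 \<Longrightarrow> length b \<ge> 2 \<Longrightarrow> (\<forall>x\<in>set b. x = hd b) \<Longrightarrow> single a b \<in> wedge_rel"
| antisym: "length a \<ge> 2 \<Longrightarrow> length b \<ge> 2 \<Longrightarrow> single a b + single b a \<in> wedge_rel"
| alt: "length a \<ge> 2 \<Longrightarrow> single a a \<in> wedge_rel"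

definition wedge_eq :: "('b list \<times> 'b list \<Rightarrow> rat) \<Rightarrow> ('b list \<times> 'b list \<Rightarrow> rat) \<Rightarrow> bool" where
  "wedge_eq u v \<longleftrightarrow> u - v \<in> wedge_rel"

text \<open>For xs = (x_0,...,x_n): the sub-tuples (x_j,...,x_{j+i}) and
  (x_j,x_{j+i+1},...,x_{j+n}), indices mod n+1.\<close>
definition subL :: "'c list \<Rightarrow> nat \<Rightarrow> nat \<Rightarrow> 'c list" where
  "subL xs j i = map (\<lambda>t. xs ! ((j + t) mod length xs)) [0..<i+1]"

definition subR :: "'c list \<Rightarrow> nat \<Rightarrow> nat \<Rightarrow> 'c list" where
  "subR xs j i = xs ! (j mod length xs) # map (\<lambda>t. xs ! ((j + t) mod length xs)) [i+1..<length xs]"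

text \<open>Sum over j in Z/(n+1), i = 1..n-1 of f(subL) \<and> f(subR), where n + 1 = length xs.\<close>
definition cobracket_terms :: "('c list \<Rightarrow> 'b list) \<Rightarrow> 'c list \<Rightarrow> ('b list \<times> 'b list \<Rightarrow> rat)" where
  "cobracket_terms f xs =
     (\<Sum>j<length xs. \<Sum>i\<in>{1..length xs - 2}. single (f (subL xs j i)) (f (subR xs j i)))"

definition cobracket :: "'b list \<Rightarrow> ('b list \<times> 'b list \<Rightarrow> rat)" where
  "cobracket xs = cobracket_terms id xs"

end

theory Submission
  imports Defs
begin

text \<open>Let \<open>m\<close> be the least valuation of a nonzero entry of \<open>x\<^sub>0,\<dots>,x\<^sub>n\<close> and \<open>L\<close> the set of
  entries of valuation exactly \<open>m\<close>. Specializing the whole tuple applies the map \<open>f\<close> which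
  reduces \<open>x \<pi>\<^sup>-\<^sup>m\<close> on \<open>L\<close> and kills everything else, and any sub-tuple containing an entry
  of \<open>L\<close> is specialized by the same \<open>f\<close>. Hence both sides agree on every term whose two
  sub-tuples meet \<open>L\<close>. Among the remaining terms, those of \<open>\<Delta>(Sp x)\<close> have a zero tuple in
  one slot and vanish. Those of the right-hand side cancel in pairs: if
  \<open>(x\<^sub>j,\<dots>,x\<^sub>j\<^sub>+\<^sub>i)\<close> misses \<open>L\<close>, the term for \<open>(j + i, n - i)\<close> has as second slot a cyclic
  rotation of it, and as first slot a tuple whose specialization equals that of
  \<open>(x\<^sub>j,x\<^sub>j\<^sub>+\<^sub>i\<^sub>+\<^sub>1,\<dots>)\<close>, since both start with an entry outside \<open>L\<close> and continue
  with the same entries; antisymmetry and cyclic invariance make the two terms cancel.\<close>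

lemma wedge_rel_sum:
  assumes "\<And>x. x \<in> S \<Longrightarrow> g x \<in> wedge_rel"
  shows "sum g S \<in> wedge_rel"
proof (cases "finite S")
  case True
  then show ?thesis
    using assms by (induction S rule: finite_induct) (auto intro: wedge_rel.intros)
qed (simp add: wedge_rel.zero)

lemma wedge_rel_uminus: "u \<in> wedge_rel \<Longrightarrow> - u \<in> wedge_rel"
  using wedge_rel.smult[of u "- 1"] by (simp add: fun_Compl_def)

lemma wedge_rel_diff: "u \<in> wedge_rel \<Longrightarrow> v \<in> wedge_rel \<Longrightarrow> u - v \<in> wedge_rel"
  using wedge_rel.add[OF _ wedge_rel_uminus[of v], of u] by simp

lemma single_zero_left_in_wedge_rel:
  assumes "length a \<ge> 2" "length b \<ge> 2" "\<forall>x\<in>set a. x = 0"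
  shows "single a b \<in> wedge_rel"
proof -
  have "hd a = 0" using assms(1,3) hd_in_set[of a] by fastforce
  then show ?thesis using assms by (intro wedge_rel.const_l) auto
qed

lemma single_zero_right_in_wedge_rel:
  assumes "length a \<ge> 2" "length b \<ge> 2" "\<forall>x\<in>set b. x = 0"
  shows "single a b \<in> wedge_rel"
proof -
  have "hd b = 0" using assms(2,3) hd_in_set[of b] by fastforce
  then show ?thesis using assms by (intro wedge_rel.const_r) auto
qed

lemma single_rotate1_add_swap_in_wedge_rel:
  assumes "length a \<ge> 2" "length b \<ge> 2"
  shows "single (rotate1 a) b + single b a \<in> wedge_rel"
proof -
  have "(single b a + single a b) - (single a b - single (rotate1 a) b) \<in> wedge_rel"
    using assms by (intro wedge_rel_diff wedge_rel.antisym wedge_rel.cyc_l)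
  then show ?thesis by (simp add: algebra_simps)
qed

lemma length_subL: "length (subL xs j i) = i + 1"
  by (simp add: subL_def)

lemma length_subR: "length (subR xs j i) = Suc (length xs - Suc i)"
  by (simp add: subR_def)

lemma subL_map: "xs \<noteq> [] \<Longrightarrow> subL (map f xs) j i = map f (subL xs j i)"
  by (simp add: subL_def)

lemma subR_map: "xs \<noteq> [] \<Longrightarrow> subR (map f xs) j i = map f (subR xs j i)"
  by (simp add: subR_def)

lemma set_subL_subset: "xs \<noteq> [] \<Longrightarrow> set (subL xs j i) \<subseteq> set xs"
  by (auto simp: subL_def)

lemma set_subR_subset: "xs \<noteq> [] \<Longrightarrow> set (subR xs j i) \<subseteq> set xs"
  by (auto simp: subR_def)

lemma hd_subL_eq_hd_subR: "hd (subL xs j i) = hd (subR xs j k)"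
  by (simp del: upt_Suc add: subL_def subR_def upt_conv_Cons)

lemma hd_subR_in_set_subL: "hd (subR xs j i) \<in> set (subL xs j i)"
  by (simp del: upt_Suc add: subL_def subR_def upt_conv_Cons)

lemma map_nth_mod_shift:
  assumes "(a + c) mod N = (b + d) mod (N::nat)"
  shows "map (\<lambda>t. xs ! ((a + t) mod N)) [c..<c + l] = map (\<lambda>t. xs ! ((b + t) mod N)) [d..<d + l]"
proof (rule nth_equalityI)
  fix k assume "k < length (map (\<lambda>t. xs ! ((a + t) mod N)) [c..<c + l])"
  moreover have "(a + (c + k)) mod N = (b + (d + k)) mod N"
    using assms by (metis add.assoc mod_add_left_eq)
  ultimately show "map (\<lambda>t. xs ! ((a + t) mod N)) [c..<c + l] ! k
      = map (\<lambda>t. xs ! ((b + t) mod N)) [d..<d + l] ! k"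
    by simp
qed simp

lemma rotate1_subR_partner:
  assumes "j < length xs" "i < length xs"
  shows "rotate1 (subR xs ((j + i) mod length xs) (length xs - 1 - i)) = subL xs j i"
proof -
  let ?N = "length xs" and ?p = "(j + i) mod length xs"
  have "(?p + (?N - i)) mod ?N = (j + 0) mod ?N"
  proof -
    have "(?p + (?N - i)) mod ?N = (j + i + (?N - i)) mod ?N" by (simp add: mod_add_left_eq)
    also have "j + i + (?N - i) = j + ?N" using assms by simp
    finally show ?thesis by simp
  qed
  then have "map (\<lambda>t. xs ! ((?p + t) mod ?N)) [?N - i..<?N - i + i]
      = map (\<lambda>t. xs ! ((j + t) mod ?N)) [0..<0 + i]"
    by (rule map_nth_mod_shift)
  moreover have "Suc (?N - Suc i) = ?N - i" using assms by simp
  ultimately show ?thesis using assms by (simp add: subR_def subL_def)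
qed

lemma tl_subL_partner:
  assumes "j < length xs" "i < length xs"
  shows "tl (subL xs ((j + i) mod length xs) (length xs - 1 - i)) = tl (subR xs j i)"
proof -
  let ?N = "length xs" and ?p = "(j + i) mod length xs"
  have shift: "(?p + 1) mod ?N = (j + (i + 1)) mod ?N" by (simp add: mod_Suc_eq)
  have l: "1 + (?N - i - 1) = ?N - i" "i + 1 + (?N - i - 1) = ?N" using assms by linarith+
  have "map (\<lambda>t. xs ! ((?p + t) mod ?N)) [1..<?N - i]
      = map (\<lambda>t. xs ! ((j + t) mod ?N)) [i + 1..<?N]"
    using map_nth_mod_shift[OF shift, of xs "?N - i - 1"] unfolding l .
  moreover have "[0..<?N - 1 - i + 1] = 0 # [1..<?N - i]"
    using assms by (simp del: upt_Suc add: upt_conv_Cons Suc_diff_Suc)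
  ultimately show ?thesis by (simp del: upt_Suc add: subL_def subR_def)
qed

lemma set_subset_subL_Un_tl_subR:
  assumes "j < length xs"
  shows "set xs \<subseteq> set (subL xs j i) \<union> set (tl (subR xs j i))"
proof
  let ?N = "length xs"
  fix x assume "x \<in> set xs"
  then obtain k where k: "k < ?N" "x = xs ! k" by (auto simp: in_set_conv_nth)
  define t where "t = (k + ?N - j) mod ?N"
  have "t < ?N" unfolding t_def using assms by (intro mod_less_divisor) linarith
  have "(j + t) mod ?N = (j + (k + ?N - j)) mod ?N" by (simp add: t_def mod_add_right_eq)
  also have "j + (k + ?N - j) = k + ?N" using assms by simp
  finally have "x = xs ! ((j + t) mod ?N)" using k by simp
  then show "x \<in> set (subL xs j i) \<union> set (tl (subR xs j i))"
    using \<open>t < ?N\<close> by (cases "t \<le> i") (force simp: subL_def subR_def)+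
qed

definition cobracket_index :: "nat \<Rightarrow> (nat \<times> nat) set" where
  "cobracket_index N = {..<N} \<times> {1..N - 2}"

definition cobracket_term :: "('c list \<Rightarrow> 'b list) \<Rightarrow> 'c list \<Rightarrow> nat \<times> nat \<Rightarrow> ('b list \<times> 'b list \<Rightarrow> rat)" where
  "cobracket_term h xs = (\<lambda>(j, i). single (h (subL xs j i)) (h (subR xs j i)))"

definition cobracket_partner :: "nat \<Rightarrow> nat \<times> nat \<Rightarrow> nat \<times> nat" where
  "cobracket_partner N = (\<lambda>(j, i). ((j + i) mod N, N - 1 - i))"

lemma cobracket_terms_eq_sum:
  "cobracket_terms h xs = sum (cobracket_term h xs) (cobracket_index (length xs))"
  by (simp add: cobracket_terms_def cobracket_term_def cobracket_index_def sum.cartesian_product)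

lemma cobracket_map: "xs \<noteq> [] \<Longrightarrow> cobracket (map f xs) = cobracket_terms (map f) xs"
  by (simp add: cobracket_def cobracket_terms_def subL_map subR_map)

lemma length_sub_ge_2:
  assumes "(j, i) \<in> cobracket_index (length xs)"
  shows "length (subL xs j i) \<ge> 2" "length (subR xs j i) \<ge> 2"
  using assms by (auto simp: cobracket_index_def length_subL length_subR)

lemma bij_betw_cobracket_partner:
  "bij_betw (cobracket_partner N) (cobracket_index N) (cobracket_index N)"
proof (rule bij_betw_byWitness[where f' = "\<lambda>(j, i). ((j + i + 1) mod N, N - 1 - i)"])
  have left_inv: "((j + i) mod N + (N - 1 - i) + 1) mod N = j"
    and right_inv: "((j + i + 1) mod N + (N - 1 - i)) mod N = j"
    if "j < N" "i + 2 \<le> N" for j i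
  proof -
    have sum: "j + i + (N - 1 - i) + 1 = j + N" "j + i + 1 + (N - 1 - i) = j + N" using that by simp_all
    have "((j + i) mod N + (N - 1 - i) + 1) mod N = (j + i + (N - 1 - i) + 1) mod N"
      by (metis add.assoc mod_add_left_eq)
    then show "((j + i) mod N + (N - 1 - i) + 1) mod N = j" unfolding sum using that by simp
    have "((j + i + 1) mod N + (N - 1 - i)) mod N = (j + i + 1 + (N - 1 - i)) mod N"
      by (metis mod_add_left_eq)
    then show "((j + i + 1) mod N + (N - 1 - i)) mod N = j" unfolding sum using that by simp
  qed
  show "\<forall>a\<in>cobracket_index N. (\<lambda>(j, i). ((j + i + 1) mod N, N - 1 - i)) (cobracket_partner N a) = a"
  proof
    fix a assume "a \<in> cobracket_index N"
    then obtain j i where "a = (j, i)" "j < N" "i + 2 \<le> N" by (auto simp: cobracket_index_def)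
    then show "(\<lambda>(j, i). ((j + i + 1) mod N, N - 1 - i)) (cobracket_partner N a) = a"
      using left_inv[of j i] by (simp add: cobracket_partner_def)
  qed
  show "\<forall>a\<in>cobracket_index N. cobracket_partner N ((\<lambda>(j, i). ((j + i + 1) mod N, N - 1 - i)) a) = a"
  proof
    fix a assume "a \<in> cobracket_index N"
    then obtain j i where "a = (j, i)" "j < N" "i + 2 \<le> N" by (auto simp: cobracket_index_def)
    then show "cobracket_partner N ((\<lambda>(j, i). ((j + i + 1) mod N, N - 1 - i)) a) = a"
      using right_inv[of j i] by (simp add: cobracket_partner_def)
  qed
qed (auto simp: cobracket_index_def cobracket_partner_def)

text \<open>\<open>L\<close> plays the entries of minimal valuation, \<open>f\<close> their rescaled reduction and \<open>g\<close> the
  specialization of sub-tuples.\<close>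

locale leading_specialization =
  fixes f :: "'a \<Rightarrow> 'b::zero" and g :: "'a list \<Rightarrow> 'b list" and L :: "'a set" and xs :: "'a list"
  assumes f_vanishes: "x \<notin> L \<Longrightarrow> f x = 0"
    and g_agrees: "set ys \<subseteq> set xs \<Longrightarrow> set ys \<inter> L \<noteq> {} \<Longrightarrow> g ys = map f ys"
    and g_rotate1: "g (rotate1 ys) = rotate1 (g ys)"
    and length_g: "length (g ys) = length ys"
    and xs_meets: "set xs \<inter> L \<noteq> {}"
    and length_xs: "length xs \<ge> 2"
begin

abbreviation meets :: "'a list \<Rightarrow> bool" where
  "meets ys \<equiv> set ys \<inter> L \<noteq> {}"

lemma xs_nonempty: "xs \<noteq> []"
  using length_xs by auto

lemma map_f_zero_if_not_meets: "\<not> meets ys \<Longrightarrow> \<forall>y\<in>set (map f ys). y = 0"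
  using f_vanishes by auto

lemma cobracket_term_eq_if_meets:
  assumes "meets (subL xs j i)" "meets (subR xs j i)"
  shows "cobracket_term (map f) xs (j, i) = cobracket_term g xs (j, i)"
  using assms g_agrees set_subL_subset[OF xs_nonempty] set_subR_subset[OF xs_nonempty]
  by (simp add: cobracket_term_def)

lemma cobracket_term_map_in_wedge_rel:
  assumes "(j, i) \<in> cobracket_index (length xs)" "\<not> (meets (subL xs j i) \<and> meets (subR xs j i))"
  shows "cobracket_term (map f) xs (j, i) \<in> wedge_rel"
  using assms length_sub_ge_2[OF assms(1)] map_f_zero_if_not_meets
  by (auto simp: cobracket_term_def intro: single_zero_left_in_wedge_rel single_zero_right_in_wedge_rel)

lemma not_meets_subL_iff_partner:
  assumes "(j, i) \<in> cobracket_index (length xs)"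
    and "cobracket_partner (length xs) (j, i) = (j', i')"
  shows "\<not> meets (subL xs j i) \<longleftrightarrow> meets (subL xs j' i') \<and> \<not> meets (subR xs j' i')"
proof -
  have ji: "j < length xs" "i < length xs" using assms(1) by (auto simp: cobracket_index_def)
  have j'i': "j' = (j + i) mod length xs" "i' = length xs - 1 - i"
    using assms(2) by (auto simp: cobracket_partner_def)
  have "set (subR xs j' i') = set (subL xs j i)"
    using rotate1_subR_partner[OF ji] by (metis j'i' set_rotate1)
  moreover have "meets (subL xs j' i')" if "\<not> meets (subL xs j i)"
  proof -
    have "meets (tl (subR xs j i))"
      using that xs_meets set_subset_subL_Un_tl_subR[OF ji(1), of i] by blast
    then show ?thesis
      using tl_subL_partner[OF ji] unfolding j'i'[symmetric]
      by (metis disjoint_iff list.sel(2) list.set_sel(2))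
  qed
  ultimately show ?thesis by auto
qed

lemma bij_betw_partner_not_meets:
  "bij_betw (cobracket_partner (length xs))
     {(j, i) \<in> cobracket_index (length xs). \<not> meets (subL xs j i)}
     {(j, i) \<in> cobracket_index (length xs). meets (subL xs j i) \<and> \<not> meets (subR xs j i)}"
    (is "bij_betw ?\<sigma> ?BL ?BR")
proof (rule bij_betw_subset[OF bij_betw_cobracket_partner])
  show "?BL \<subseteq> cobracket_index (length xs)" by auto
  have partner_in_BR_iff: "?\<sigma> a \<in> ?BR \<longleftrightarrow> a \<in> ?BL" if "a \<in> cobracket_index (length xs)" for a
  proof -
    obtain j i where a: "a = (j, i)" by (cases a)
    obtain j' i' where partner: "?\<sigma> (j, i) = (j', i')" by (cases "?\<sigma> (j, i)")
    have ji: "(j, i) \<in> cobracket_index (length xs)" using that a by simp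
    have "(j', i') \<in> cobracket_index (length xs)"
      using bij_betw_apply[OF bij_betw_cobracket_partner ji] partner by simp
    then show ?thesis
      using not_meets_subL_iff_partner[OF ji partner] ji unfolding a partner by blast
  qed
  show "?\<sigma> ` ?BL = ?BR"
  proof
    show "?\<sigma> ` ?BL \<subseteq> ?BR"
    proof (rule image_subsetI)
      fix a assume a: "a \<in> ?BL"
      then have "a \<in> cobracket_index (length xs)" by auto
      from partner_in_BR_iff[OF this] a show "?\<sigma> a \<in> ?BR" ..
    qed
    show "?BR \<subseteq> ?\<sigma> ` ?BL"
    proof
      fix b assume b: "b \<in> ?BR"
      then have "b \<in> ?\<sigma> ` cobracket_index (length xs)"
        using bij_betw_imp_surj_on[OF bij_betw_cobracket_partner] by auto
      then obtain a where a: "a \<in> cobracket_index (length xs)" "b = ?\<sigma> a" ..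
      with b have "a \<in> ?BL" using partner_in_BR_iff[OF a(1)] by simp
      with a(2) show "b \<in> ?\<sigma> ` ?BL" by (rule image_eqI)
    qed
  qed
qed

lemma cobracket_term_add_partner_in_wedge_rel:
  assumes ji: "(j, i) \<in> cobracket_index (length xs)"
    and partner: "cobracket_partner (length xs) (j, i) = (j', i')"
    and not_meets: "\<not> meets (subL xs j i)"
  shows "cobracket_term g xs (j, i) + cobracket_term g xs (j', i') \<in> wedge_rel"
proof -
  have ji': "(j', i') \<in> cobracket_index (length xs)"
    using bij_betw_apply[OF bij_betw_cobracket_partner ji] partner by simp
  have bounds: "j < length xs" "i < length xs" using ji by (auto simp: cobracket_index_def)
  have j'i': "j' = (j + i) mod length xs" "i' = length xs - 1 - i"
    using partner by (auto simp: cobracket_partner_def)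
  have meets': "meets (subL xs j' i')" and not_meets': "\<not> meets (subR xs j' i')"
    using not_meets_subL_iff_partner[OF ji partner] not_meets by auto
  have subL'_ne: "subL xs j' i' \<noteq> []" and subR_ne: "subR xs j i \<noteq> []"
    by (simp_all add: subL_def subR_def)
  have "hd (subL xs j' i') \<in> set (subR xs j' i')"
    using hd_subL_eq_hd_subR[of xs j' i' i'] by (simp add: subR_def)
  then have hd': "hd (subL xs j' i') \<notin> L" using not_meets' by blast
  have hd: "hd (subR xs j i) \<notin> L" using hd_subR_in_set_subL not_meets by blast
  have tl: "tl (subL xs j' i') = tl (subR xs j i)"
    using tl_subL_partner[OF bounds] by (simp add: j'i')
  have "meets (tl (subL xs j' i'))"
    using meets' hd' subL'_ne by (cases "subL xs j' i'") auto
  then have meets: "meets (subR xs j i)"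
    using tl subR_ne by (cases "subR xs j i") auto
  have "map f (subL xs j' i') = map f (subR xs j i)"
    using hd' hd tl subL'_ne subR_ne f_vanishes
    by (cases "subL xs j' i'"; cases "subR xs j i") auto
  then have C: "g (subL xs j' i') = g (subR xs j i)"
    using g_agrees meets' meets set_subL_subset[OF xs_nonempty] set_subR_subset[OF xs_nonempty]
    by metis
  have A: "g (subL xs j i) = rotate1 (g (subR xs j' i'))"
    using rotate1_subR_partner[OF bounds] g_rotate1 unfolding j'i' by metis
  show ?thesis
    using single_rotate1_add_swap_in_wedge_rel[of "g (subR xs j' i')" "g (subR xs j i)"]
      length_sub_ge_2[OF ji] length_sub_ge_2[OF ji'] A C
    by (simp add: cobracket_term_def length_g)
qed

theorem wedge_eq_cobracket_terms:
  "wedge_eq (cobracket_terms (map f) xs) (cobracket_terms g xs)"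
proof -
  let ?I = "cobracket_index (length xs)" and ?\<sigma> = "cobracket_partner (length xs)"
  let ?T = "cobracket_term (map f) xs" and ?S = "cobracket_term g xs"
  define BL where "BL = {(j, i) \<in> ?I. \<not> meets (subL xs j i)}"
  define BR where "BR = {(j, i) \<in> ?I. meets (subL xs j i) \<and> \<not> meets (subR xs j i)}"
  have fin: "finite ?I" by (simp add: cobracket_index_def)
  have bad_sub: "BL \<union> BR \<subseteq> ?I" and disj: "BL \<inter> BR = {}" by (auto simp: BL_def BR_def)
  have "bij_betw ?\<sigma> BL BR"
    unfolding BL_def BR_def by (rule bij_betw_partner_not_meets)
  then have "sum ?S BR = (\<Sum>a\<in>BL. ?S (?\<sigma> a))" by (simp add: sum.reindex_bij_betw)
  moreover have "finite BL" "finite BR" using fin bad_sub by (auto intro: finite_subset)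
  ultimately have "sum ?S (BL \<union> BR) = (\<Sum>a\<in>BL. ?S a + ?S (?\<sigma> a))"
    using disj by (simp add: sum.union_disjoint sum.distrib)
  moreover have "sum ?T (?I - (BL \<union> BR)) = sum ?S (?I - (BL \<union> BR))"
    using cobracket_term_eq_if_meets by (intro sum.cong) (auto simp: BL_def BR_def)
  ultimately have "sum ?T ?I - sum ?S ?I = sum ?T (BL \<union> BR) - (\<Sum>a\<in>BL. ?S a + ?S (?\<sigma> a))"
    using fin bad_sub by (simp add: sum.subset_diff[of "BL \<union> BR" ?I])
  moreover have "sum ?T (BL \<union> BR) \<in> wedge_rel"
    using cobracket_term_map_in_wedge_rel by (intro wedge_rel_sum) (auto simp: BL_def BR_def)
  moreover have "(\<Sum>a\<in>BL. ?S a + ?S (?\<sigma> a)) \<in> wedge_rel"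
  proof (rule wedge_rel_sum)
    fix a assume "a \<in> BL"
    then obtain j i where "a = (j, i)" "(j, i) \<in> ?I" "\<not> meets (subL xs j i)"
      by (auto simp: BL_def)
    moreover obtain j' i' where "?\<sigma> (j, i) = (j', i')" by fastforce
    ultimately show "?S a + ?S (?\<sigma> a) \<in> wedge_rel"
      using cobracket_term_add_partner_in_wedge_rel by simp
  qed
  ultimately show ?thesis
    by (simp add: wedge_eq_def cobracket_terms_eq_sum wedge_rel_diff)
qed

end

lemma Sp_rotate1: "Sp \<nu> res \<pi> (rotate1 ys) = rotate1 (Sp \<nu> res \<pi> ys)"
  by (simp add: Sp_def Let_def rotate1_map)

lemma length_Sp: "length (Sp \<nu> res \<pi> ys) = length ys"
  by (simp add: Sp_def Let_def)

lemma Sp_all_zero: "\<forall>y\<in>set ys. y = 0 \<Longrightarrow> Sp \<nu> res \<pi> ys = map (\<lambda>_. 0) ys"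
  by (simp add: Sp_def Let_def)

lemma Sp_eq_if_attains_Min:
  assumes "finite S" "set ys \<subseteq> S"
    and m: "m = Min (\<nu> ` {x \<in> S. x \<noteq> 0})"
    and "\<exists>y\<in>set ys. y \<noteq> 0 \<and> \<nu> y = m"
  shows "Sp \<nu> res \<pi> ys = map (\<lambda>x. if x \<noteq> 0 \<and> \<nu> x = m then res (x * \<pi> powi (- m)) else 0) ys"
proof -
  have "Min (\<nu> ` {x \<in> set ys. x \<noteq> 0}) = m"
  proof (rule Min_eqI)
    show "m \<le> y" if "y \<in> \<nu> ` {x \<in> set ys. x \<noteq> 0}" for y
      using that assms(1,2) unfolding m by (auto intro: Min_le)
    show "m \<in> \<nu> ` {x \<in> set ys. x \<noteq> 0}" using assms(4) by auto
  qed simp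
  then show ?thesis by (simp add: Sp_def Let_def)
qed

theorem lemma2p1:
  fixes \<nu> :: "'a::field \<Rightarrow> int" and res :: "'a \<Rightarrow> 'b::field" and \<pi> :: 'a
    and xs :: "'a list"
  assumes "discrete_valuation \<nu>"
    and "residue_map \<nu> res"
    and "\<pi> \<noteq> 0" and "\<nu> \<pi> = 1"
    and "length xs \<ge> 2"
  shows "wedge_eq (cobracket (Sp \<nu> res \<pi> xs)) (cobracket_terms (Sp \<nu> res \<pi>) xs)"
proof (cases "\<forall>x\<in>set xs. x = 0")
  case True
  \<comment> \<open>no entry has a minimal valuation; every specialization is a zero tuple\<close>
  interpret leading_specialization "\<lambda>_. 0" "Sp \<nu> res \<pi>" UNIV xs
    using True assms(5) by unfold_locales (auto simp: Sp_rotate1 length_Sp intro!: Sp_all_zero)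
  show ?thesis
    using wedge_eq_cobracket_terms True xs_nonempty by (simp add: Sp_all_zero cobracket_map)
next
  case False
  define m where "m = Min (\<nu> ` {x \<in> set xs. x \<noteq> 0})"
  define f where "f = (\<lambda>x. if x \<noteq> 0 \<and> \<nu> x = m then res (x * \<pi> powi (- m)) else 0)"
  have "m \<in> \<nu> ` {x \<in> set xs. x \<noteq> 0}"
    unfolding m_def using False by (intro Min_in) auto
  moreover have "Sp \<nu> res \<pi> ys = map f ys"
    if "set ys \<subseteq> set xs" "set ys \<inter> {x. x \<noteq> 0 \<and> \<nu> x = m} \<noteq> {}" for ys
    using Sp_eq_if_attains_Min[OF _ that(1) m_def] that(2) by (auto simp: f_def)
  ultimately interpret leading_specialization f "Sp \<nu> res \<pi>" "{x. x \<noteq> 0 \<and> \<nu> x = m}" xs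
    using assms(5) by unfold_locales (auto simp: f_def Sp_rotate1 length_Sp)
  have "Sp \<nu> res \<pi> xs = map f xs" by (simp add: Sp_def Let_def m_def f_def)
  then show ?thesis
    using wedge_eq_cobracket_terms xs_nonempty by (simp add: cobracket_map)
qed

end
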